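(* For every integer $k\ge 1$, let $G_k$ be the graph consisting of a path $u_1u_2\cdots u_{2^k-1}$ together with an independent set $\{v_0,\dots,v_{k-1}\}$ disjoint from the path, where $v_i$ is adjacent to $u_j$ if and only if $i$ is the largest integer such that $2^i$ divides $j$ (and there are no other edges). Then $G_k$ has $2^k+k-1$ vertices, is $\mathcal{O}_2$-free, does not contain $K_{3,3}$ as a subgraph, and has treewidth exactly $k$.
   Context: All graphs are finite and simple. Two vertex-disjoint subgraphs are independent if there is no edge between them. A graph is $\mathcal{O}_2$-free if it does not contain two vertex-disjoint cycles with no edge between them; equivalently, it has no induced subgraph that is a disjoint union of two cycles. *)

theory Defs
  imports Main
begin

type_synonym 'a graph = "'a set \<times> 'a set set"

definition verts :: "'a graph \<Rightarrow> 'a set" where "verts G = fst G"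
definition edges :: "'a graph \<Rightarrow> 'a set set" where "edges G = snd G"

definition simple_graph :: "'a graph \<Rightarrow> bool" where
  "simple_graph G \<longleftrightarrow> finite (verts G) \<and>
     (\<forall>e\<in>edges G. \<exists>x y. x \<noteq> y \<and> x \<in> verts G \<and> y \<in> verts G \<and> e = {x, y})"

definition is_cycle :: "'a graph \<Rightarrow> 'a list \<Rightarrow> bool" where
  "is_cycle G xs \<longleftrightarrow> length xs \<ge> 3 \<and> distinct xs \<and> set xs \<subseteq> verts G \<and>
     (\<forall>i < length xs. {xs ! i, xs ! ((i + 1) mod length xs)} \<in> edges G)"

definition independent_sets :: "'a graph \<Rightarrow> 'a set \<Rightarrow> 'a set \<Rightarrow> bool" where
  "independent_sets G A B \<longleftrightarrow> A \<inter> B = {} \<and> (\<forall>a\<in>A. \<forall>b\<in>B. {a, b} \<notin> edges G)"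

definition O2_free :: "'a graph \<Rightarrow> bool" where
  "O2_free G \<longleftrightarrow> \<not> (\<exists>xs ys. is_cycle G xs \<and> is_cycle G ys \<and> independent_sets G (set xs) (set ys))"

definition has_K33_subgraph :: "'a graph \<Rightarrow> bool" where
  "has_K33_subgraph G \<longleftrightarrow> (\<exists>a1 a2 a3 b1 b2 b3.
     distinct [a1, a2, a3, b1, b2, b3] \<and> {a1,a2,a3,b1,b2,b3} \<subseteq> verts G \<and>
     (\<forall>a\<in>{a1,a2,a3}. \<forall>b\<in>{b1,b2,b3}. {a, b} \<in> edges G))"

definition connected_in :: "'a graph \<Rightarrow> 'a set \<Rightarrow> bool" where
  "connected_in G S \<longleftrightarrow> S \<subseteq> verts G \<and>
     (\<forall>x\<in>S. \<forall>y\<in>S. (\<lambda>u v. u \<in> S \<and> v \<in> S \<and> {u, v} \<in> edges G)\<^sup>*\<^sup>* x y)"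

definition is_tree :: "'b graph \<Rightarrow> bool" where
  "is_tree T \<longleftrightarrow> simple_graph T \<and> verts T \<noteq> {} \<and> connected_in T (verts T) \<and>
     \<not> (\<exists>xs. is_cycle T xs)"

definition tree_decomposition :: "'a graph \<Rightarrow> nat graph \<Rightarrow> (nat \<Rightarrow> 'a set) \<Rightarrow> bool" where
  "tree_decomposition G T B \<longleftrightarrow> is_tree T \<and>
     (\<forall>t\<in>verts T. B t \<subseteq> verts G) \<and>
     (\<forall>v\<in>verts G. \<exists>t\<in>verts T. v \<in> B t) \<and>
     (\<forall>e\<in>edges G. \<exists>t\<in>verts T. e \<subseteq> B t) \<and>
     (\<forall>v\<in>verts G. connected_in T {t \<in> verts T. v \<in> B t})"

definition treewidth :: "'a graph \<Rightarrow> nat" where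
  "treewidth G = (LEAST w. \<exists>T B. tree_decomposition G T B \<and>
                      (\<forall>t\<in>verts T. card (B t) \<le> w + 1))"

text \<open>The graph G_k: Inl j is u_j (1 \<le> j \<le> 2^k-1), Inr i is v_i (i < k).\<close>
definition Gk :: "nat \<Rightarrow> (nat + nat) graph" where
  "Gk k = (Inl ` {1 .. 2^k - 1} \<union> Inr ` {..<k},
           {{Inl j, Inl (j + 1)} | j. 1 \<le> j \<and> j + 1 \<le> 2^k - 1} \<union>
           {{Inr i, Inl j} | i j. i < k \<and> 1 \<le> j \<and> j \<le> 2^k - 1 \<and>
               i = (GREATEST i. 2^i dvd j)})"

end

theory Submission
  imports Defs "HOL-Computational_Algebra.Primes"
begin

text \<open>
  Write nu(j) for the 2-adic valuation of j, so that v_i is adjacent exactly to the path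
  vertices u_j with nu(j) = i. If i is the least index of a v-vertex on a cycle, the maximal run
  of consecutive path vertices ending at the top path vertex of the cycle starts and ends at
  multiples of 2^i, hence contains some u_j with nu(j) = i. So every cycle meets the
  v-vertices, and of two cycles the one containing the overall least v_i is joined by an edge
  to the other. A path vertex has at most three neighbours, which rules out K_{3,3}.
  For the treewidth, bags consisting of v_0, ..., v_{k-2} and one edge of the rest, arranged
  along a path, give width k; conversely the sets {v_i} together with the u_j for
  2^(i-1) < j <= 2^i, and the remaining top part of the path, are the branch sets of a
  K_{k+1} minor, which by the Helly property of subtrees of a tree forces a bag of size k + 1
  in every tree decomposition.
\<close>


section \<open>Walks, cycles and trees\<close>

definition adj_in :: "'b graph \<Rightarrow> 'b set \<Rightarrow> 'b \<Rightarrow> 'b \<Rightarrow> bool" where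
  "adj_in G S = (\<lambda>u v. u \<in> S \<and> v \<in> S \<and> {u, v} \<in> edges G)"

lemma connected_in_iff:
  "connected_in G S \<longleftrightarrow> S \<subseteq> verts G \<and> (\<forall>x\<in>S. \<forall>y\<in>S. (adj_in G S)\<^sup>*\<^sup>* x y)"
  unfolding connected_in_def adj_in_def by simp

lemma symp_adj_in: "symp (adj_in G S)"
  by (rule sympI) (auto simp: adj_in_def insert_commute)

lemma adj_in_rtranclp_sym: "(adj_in G S)\<^sup>*\<^sup>* x y \<Longrightarrow> (adj_in G S)\<^sup>*\<^sup>* y x"
  using sympD[OF symp_rtranclp[OF symp_adj_in]] .

lemma adj_in_rtranclp_mono:
  "S \<subseteq> S' \<Longrightarrow> edges G \<subseteq> edges G' \<Longrightarrow> (adj_in G S)\<^sup>*\<^sup>* x y \<Longrightarrow> (adj_in G' S')\<^sup>*\<^sup>* x y"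
  by (erule rtranclp_mono[THEN predicate2D, rotated]) (auto simp: adj_in_def)

lemma connected_inI_center:
  assumes "c \<in> S" "S \<subseteq> verts G" "\<And>x. x \<in> S \<Longrightarrow> (adj_in G S)\<^sup>*\<^sup>* c x"
  shows "connected_in G S"
  using assms adj_in_rtranclp_sym unfolding connected_in_iff by (meson rtranclp_trans)

lemma connected_in_singleton: "v \<in> verts G \<Longrightarrow> connected_in G {v}"
  by (simp add: connected_in_def)

lemma connected_in_nbr:
  assumes "connected_in G S" "l \<in> S" "x \<in> S" "x \<noteq> l"
  shows "\<exists>z\<in>S. {l, z} \<in> edges G"
proof -
  have "(adj_in G S)\<^sup>*\<^sup>* l x" using assms(1-3) unfolding connected_in_iff by blast
  then show ?thesis using assms(4) by (cases rule: converse_rtranclpE) (auto simp: adj_in_def)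
qed

lemma simple_graph_edge_verts:
  "simple_graph G \<Longrightarrow> {a, b} \<in> edges G \<Longrightarrow> a \<noteq> b \<and> a \<in> verts G \<and> b \<in> verts G"
  unfolding simple_graph_def by (auto simp: doubleton_eq_iff)

lemma is_cycle_verts: "is_cycle G xs \<Longrightarrow> set xs \<subseteq> verts G"
  unfolding is_cycle_def by blast

lemma is_cycle_mono: "is_cycle G xs \<Longrightarrow> verts G \<subseteq> verts H \<Longrightarrow> edges G \<subseteq> edges H \<Longrightarrow> is_cycle H xs"
  unfolding is_cycle_def by blast

lemma is_cycle_two_nbrs:
  assumes "is_cycle G xs" "x \<in> set xs"
  shows "\<exists>y z. y \<in> set xs \<and> z \<in> set xs \<and> y \<noteq> z \<and> {x, y} \<in> edges G \<and> {x, z} \<in> edges G"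
proof -
  define n where "n = length xs"
  have n3: "n \<ge> 3" and dist: "distinct xs"
    and E: "\<And>i. i < n \<Longrightarrow> {xs ! i, xs ! ((i + 1) mod n)} \<in> edges G"
    using assms(1) unfolding is_cycle_def n_def by auto
  obtain p where p: "p < n" "x = xs ! p" using assms(2) by (metis in_set_conv_nth n_def)
  define q where "q = (p + n - 1) mod n"
  have q: "q < n" "(q + 1) mod n = p"
    using p n3 by (simp_all add: q_def mod_Suc_eq)
  have "(p + 1) mod n \<noteq> q"
    using p n3 by (auto simp: q_def mod_if split: if_splits)
  moreover have pn: "(p + 1) mod n < n" using n3 by simp
  ultimately have "xs ! ((p + 1) mod n) \<noteq> xs ! q"
    using dist q(1) n3 nth_eq_iff_index_eq[of xs "(p + 1) mod n" q] by (simp add: n_def)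
  moreover have "{x, xs ! q} \<in> edges G" using E[OF q(1)] q(2) p(2) by (simp add: insert_commute)
  moreover have "{x, xs ! ((p + 1) mod n)} \<in> edges G" using E[OF p(1)] p(2) by simp
  moreover have "xs ! q \<in> set xs" "xs ! ((p + 1) mod n) \<in> set xs"
    using q(1) pn unfolding n_def by (simp_all only: nth_mem)
  ultimately show ?thesis by blast
qed

lemma is_cycle_nbrs_cover:
  assumes "is_cycle G xs" "x \<in> set xs" "\<And>y. {x, y} \<in> edges G \<Longrightarrow> y \<in> {a, b, c}" "a \<notin> set xs"
  shows "b \<in> set xs \<and> c \<in> set xs"
  using is_cycle_two_nbrs[OF assms(1,2)] assms(3,4) by blast

lemma independent_sets_commute: "independent_sets G A B \<longleftrightarrow> independent_sets G B A"
  unfolding independent_sets_def by (metis Int_commute insert_commute)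

lemma distinct3_subset_eq: "distinct [x, y, z] \<Longrightarrow> {x, y, z} \<subseteq> {p, q, r} \<Longrightarrow> {x, y, z} = {p, q, r}"
  by auto

lemma distinct3_not_subset_pair: "distinct [x, y, z] \<Longrightarrow> \<not> {x, y, z} \<subseteq> {p, q}"
  by auto

definition is_path :: "'b graph \<Rightarrow> 'b list \<Rightarrow> bool" where
  "is_path G xs \<longleftrightarrow> distinct xs \<and> set xs \<subseteq> verts G \<and>
     (\<forall>i. Suc i < length xs \<longrightarrow> {xs ! i, xs ! Suc i} \<in> edges G)"

lemma is_path_take: "is_path G xs \<Longrightarrow> is_path G (take n xs)"
  unfolding is_path_def by (auto dest: in_set_takeD)

lemma is_cycle_if_closed_path:
  assumes "is_path G xs" "length xs \<ge> 3" "{xs ! (length xs - 1), xs ! 0} \<in> edges G"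
  shows "is_cycle G xs"
  unfolding is_cycle_def
proof (intro conjI allI impI)
  fix q assume q: "q < length xs"
  show "{xs ! q, xs ! ((q + 1) mod length xs)} \<in> edges G"
  proof (cases "Suc q = length xs")
    case True
    then have "q = length xs - 1" by simp
    then show ?thesis using True assms(3) by simp
  next
    case False
    then show ?thesis using assms(1) q by (simp add: is_path_def)
  qed
qed (use assms in \<open>auto simp: is_path_def\<close>)

lemma acyclic_min_degree_two_long_path:
  assumes sg: "simple_graph G" and acyclic: "\<nexists>xs. is_cycle G xs" and ne: "verts G \<noteq> {}"
    and deg: "\<And>v. v \<in> verts G \<Longrightarrow> \<exists>y z. y \<noteq> z \<and> {v, y} \<in> edges G \<and> {v, z} \<in> edges G"
    and n: "n \<ge> 2"
  shows "\<exists>xs. length xs = n \<and> is_path G xs"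
  using n
proof (induction n rule: nat_induct_at_least)
  case base
  obtain v y where "v \<in> verts G" "{v, y} \<in> edges G" using ne deg by blast
  then show ?case
    using simple_graph_edge_verts[OF sg] by (intro exI[of _ "[v, y]"]) (auto simp: is_path_def less_Suc_eq)
next
  case (Suc n)
  then obtain xs where xs: "length xs = n" "is_path G xs" by blast
  then have "xs ! 0 \<in> set xs" using Suc.hyps by simp
  then have "xs ! 0 \<in> verts G" using xs(2) by (auto simp: is_path_def)
  then obtain w where w: "w \<noteq> xs ! 1" "{xs ! 0, w} \<in> edges G" using deg by metis
  have "w \<noteq> xs ! 0" using simple_graph_edge_verts[OF sg w(2)] by blast
  show ?case
  proof (cases "w \<in> set xs")
    case False
    have "is_path G (w # xs)"
      using xs(2) False w(2) simple_graph_edge_verts[OF sg w(2)]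
      by (auto simp: is_path_def nth_Cons insert_commute split: nat.splits)
    then show ?thesis using xs(1) by (intro exI[of _ "w # xs"]) simp
  next
    case True
    then obtain i where i: "i < n" "xs ! i = w" by (metis in_set_conv_nth xs(1))
    with w \<open>w \<noteq> xs ! 0\<close> have "i \<ge> 2" by (metis One_nat_def less_2_cases not_le)
    then have "is_cycle G (take (Suc i) xs)"
      using is_path_take[OF xs(2)] i w(2) xs(1) by (intro is_cycle_if_closed_path) (auto simp: insert_commute)
    then show ?thesis using acyclic by blast
  qed
qed

lemma finite_verts_tree: "is_tree T \<Longrightarrow> finite (verts T)"
  by (simp add: is_tree_def simple_graph_def)

definition is_leaf :: "'b graph \<Rightarrow> 'b \<Rightarrow> bool" where
  "is_leaf T l \<longleftrightarrow> l \<in> verts T \<and> (\<forall>y z. {l, y} \<in> edges T \<longrightarrow> {l, z} \<in> edges T \<longrightarrow> y = z)"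

lemma tree_has_leaf:
  assumes T: "is_tree T"
  shows "\<exists>l. is_leaf T l"
proof (rule ccontr)
  assume "\<nexists>l. is_leaf T l"
  then have deg: "\<And>v. v \<in> verts T \<Longrightarrow> \<exists>y z. y \<noteq> z \<and> {v, y} \<in> edges T \<and> {v, z} \<in> edges T"
    unfolding is_leaf_def by blast
  have fin: "finite (verts T)" using finite_verts_tree[OF T] .
  have ne: "verts T \<noteq> {}" using T by (simp add: is_tree_def)
  then have "Suc (card (verts T)) \<ge> 2" using fin by (simp add: Suc_le_eq card_gt_0_iff)
  moreover have "simple_graph T" "\<nexists>xs. is_cycle T xs" using T by (simp_all add: is_tree_def)
  ultimately obtain xs where "length xs = Suc (card (verts T))" "is_path T xs"
    using acyclic_min_degree_two_long_path[OF _ _ ne deg] by blast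
  moreover from this have "card (set xs) \<le> card (verts T)"
    using fin by (intro card_mono) (auto simp: is_path_def)
  ultimately show False by (simp add: is_path_def distinct_card)
qed

definition delete_vertex :: "'b graph \<Rightarrow> 'b \<Rightarrow> 'b graph" where
  "delete_vertex G l = (verts G - {l}, {e \<in> edges G. l \<notin> e})"

lemma verts_delete_vertex [simp]: "verts (delete_vertex G l) = verts G - {l}"
  by (simp add: delete_vertex_def verts_def)

lemma edges_delete_vertex [simp]: "edges (delete_vertex G l) = {e \<in> edges G. l \<notin> e}"
  by (simp add: delete_vertex_def edges_def)

lemma walk_avoiding_leaf:
  assumes sg: "simple_graph T" and l: "is_leaf T l" and walk: "(adj_in T S)\<^sup>*\<^sup>* x y" and y: "y \<noteq> l"
  shows "(x \<noteq> l \<longrightarrow> (adj_in (delete_vertex T l) (S - {l}))\<^sup>*\<^sup>* x y) \<and>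
         (x = l \<longrightarrow> (\<exists>z. {l, z} \<in> edges T \<and> (adj_in (delete_vertex T l) (S - {l}))\<^sup>*\<^sup>* z y))"
  using walk
proof (induction rule: converse_rtranclp_induct)
  case base
  then show ?case using y by simp
next
  case (step x x')
  have x: "x \<in> S" "x' \<in> S" "{x, x'} \<in> edges T" "x \<noteq> x'"
    using step(1) simple_graph_edge_verts[OF sg] by (auto simp: adj_in_def)
  show ?case
  proof (cases "x = l")
    case True
    then show ?thesis using step(3) x by auto
  next
    case False
    show ?thesis
    proof (cases "x' = l")
      case True
      then obtain z where "{l, z} \<in> edges T" "(adj_in (delete_vertex T l) (S - {l}))\<^sup>*\<^sup>* z y"
        using step(3) by blast
      moreover have "x = z" using l x(3) True calculation(1) by (auto simp: is_leaf_def insert_commute)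
      ultimately show ?thesis using False by simp
    next
      case False
      then have "adj_in (delete_vertex T l) (S - {l}) x x'" using x \<open>x \<noteq> l\<close> by (simp add: adj_in_def)
      moreover have "(adj_in (delete_vertex T l) (S - {l}))\<^sup>*\<^sup>* x' y" using step(3) False by simp
      ultimately show ?thesis using \<open>x \<noteq> l\<close> by (simp add: converse_rtranclp_into_rtranclp)
    qed
  qed
qed

lemma connected_in_delete_leaf:
  assumes "simple_graph T" "is_leaf T l" "connected_in T S"
  shows "connected_in (delete_vertex T l) (S - {l})"
  using assms(3) walk_avoiding_leaf[OF assms(1,2)] unfolding connected_in_iff by auto

lemma is_tree_delete_leaf:
  assumes T: "is_tree T" and l: "is_leaf T l" and ne: "verts T \<noteq> {l}"
  shows "is_tree (delete_vertex T l)"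
proof -
  have sg: "simple_graph T" using T by (simp add: is_tree_def)
  then have "simple_graph (delete_vertex T l)" by (simp add: simple_graph_def) blast
  moreover have "connected_in (delete_vertex T l) (verts (delete_vertex T l))"
    using connected_in_delete_leaf[OF sg l] T by (simp add: is_tree_def)
  moreover have "\<nexists>xs. is_cycle (delete_vertex T l) xs"
    using T is_cycle_mono[of "delete_vertex T l" _ T] by (auto simp: is_tree_def)
  moreover have "verts T - {l} \<noteq> {}" using ne l by (auto simp: is_leaf_def)
  ultimately show ?thesis by (simp add: is_tree_def)
qed

section \<open>Tree decompositions and clique minors\<close>

lemma Int_delete_leaf_nonempty:
  assumes sg: "simple_graph T" and l: "is_leaf T l" and A: "connected_in T A" and B: "connected_in T B"
    and "A \<inter> B \<noteq> {}" "\<exists>x\<in>A. x \<noteq> l" "\<exists>x\<in>B. x \<noteq> l"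
  shows "(A - {l}) \<inter> (B - {l}) \<noteq> {}"
proof
  assume "(A - {l}) \<inter> (B - {l}) = {}"
  then have "l \<in> A" "l \<in> B" using assms(5) by blast+
  \<comment> \<open>both sets then contain the unique neighbour of the leaf\<close>
  obtain z where z: "z \<in> A" "{l, z} \<in> edges T" using connected_in_nbr[OF A \<open>l \<in> A\<close>] assms(6) by blast
  obtain z' where z': "z' \<in> B" "{l, z'} \<in> edges T" using connected_in_nbr[OF B \<open>l \<in> B\<close>] assms(7) by blast
  have "z = z'" using l z(2) z'(2) by (simp add: is_leaf_def)
  moreover have "z \<noteq> l" using simple_graph_edge_verts[OF sg z(2)] by auto
  ultimately show False using z(1) z'(1) \<open>(A - {l}) \<inter> (B - {l}) = {}\<close> by blast
qed

lemma subtrees_Helly: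
  fixes T :: "'b graph" and S :: "'i \<Rightarrow> 'b set"
  assumes "is_tree T" "\<And>i. i \<in> I \<Longrightarrow> S i \<noteq> {}" "\<And>i. i \<in> I \<Longrightarrow> connected_in T (S i)"
    and "\<And>i j. i \<in> I \<Longrightarrow> j \<in> I \<Longrightarrow> S i \<inter> S j \<noteq> {}"
  shows "\<exists>t\<in>verts T. \<forall>i\<in>I. t \<in> S i"
  using assms
proof (induction "card (verts T)" arbitrary: T S rule: less_induct)
  case less
  note T = less.prems(1) and ne = less.prems(2) and conn = less.prems(3) and meet = less.prems(4)
  have sg: "simple_graph T" using T by (simp add: is_tree_def)
  obtain l where l: "is_leaf T l" using tree_has_leaf[OF T] by blast
  then have "l \<in> verts T" by (simp add: is_leaf_def)
  show ?case
  proof (cases "\<forall>i\<in>I. l \<in> S i")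
    case True
    then show ?thesis using \<open>l \<in> verts T\<close> by blast
  next
    case False
    have other: "\<exists>x\<in>S i. x \<noteq> l" if i: "i \<in> I" for i
    proof (rule ccontr)
      assume "\<not> (\<exists>x\<in>S i. x \<noteq> l)"
      then have "S i = {l}" using ne[OF i] by auto
      then show False using False meet[OF i] by auto
    qed
    obtain i where i: "i \<in> I" using False by blast
    have "verts T \<noteq> {l}" using other[OF i] conn[OF i] by (auto simp: connected_in_iff)
    define T' where "T' = delete_vertex T l"
    have "\<exists>t\<in>verts T'. \<forall>i\<in>I. t \<in> S i - {l}"
    proof (rule less.hyps)
      show "card (verts T') < card (verts T)"
        unfolding T'_def verts_delete_vertex by (rule card_Diff1_less[OF finite_verts_tree[OF T] \<open>l \<in> verts T\<close>])
      show "is_tree T'" unfolding T'_def by (rule is_tree_delete_leaf[OF T l \<open>verts T \<noteq> {l}\<close>])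
      show "S i - {l} \<noteq> {}" if "i \<in> I" for i using other[OF that] by blast
      show "connected_in T' (S i - {l})" if "i \<in> I" for i
        unfolding T'_def by (rule connected_in_delete_leaf[OF sg l conn[OF that]])
      show "(S i - {l}) \<inter> (S j - {l}) \<noteq> {}" if "i \<in> I" "j \<in> I" for i j
        using that by (intro Int_delete_leaf_nonempty[OF sg l] conn meet other)
    qed
    then show ?thesis by (auto simp: T'_def)
  qed
qed

lemma connected_in_bags_meeting:
  assumes td: "tree_decomposition G T B" and X: "connected_in G X"
  shows "connected_in T {t \<in> verts T. B t \<inter> X \<noteq> {}}"
  unfolding connected_in_iff
proof (intro conjI ballI)
  let ?R = "adj_in T {t \<in> verts T. B t \<inter> X \<noteq> {}}"
  have bag_walk: "?R\<^sup>*\<^sup>* t t'" if "v \<in> X" "t \<in> verts T" "v \<in> B t" "t' \<in> verts T" "v \<in> B t'" for v t t'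
  proof -
    have "v \<in> verts G" using that(1) X by (auto simp: connected_in_def)
    then have "connected_in T {t \<in> verts T. v \<in> B t}" using td by (simp add: tree_decomposition_def)
    then have "(adj_in T {t \<in> verts T. v \<in> B t})\<^sup>*\<^sup>* t t'" using that(2-5) by (simp add: connected_in_iff)
    then show ?thesis by (rule adj_in_rtranclp_mono[rotated 2]) (use that(1) in auto)
  qed
  fix t1 t2 assume t1: "t1 \<in> {t \<in> verts T. B t \<inter> X \<noteq> {}}" and t2: "t2 \<in> {t \<in> verts T. B t \<inter> X \<noteq> {}}"
  obtain x1 where x1: "x1 \<in> B t1" "x1 \<in> X" using t1 by blast
  obtain x2 where x2: "x2 \<in> B t2" "x2 \<in> X" using t2 by blast
  have "(adj_in G X)\<^sup>*\<^sup>* x1 x2" using X x1(2) x2(2) by (simp add: connected_in_iff)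
  then have "\<forall>t\<in>verts T. x2 \<in> B t \<longrightarrow> ?R\<^sup>*\<^sup>* t1 t"
  proof (induction rule: rtranclp_induct)
    case base
    show ?case
    proof (intro ballI impI)
      fix t assume "t \<in> verts T" "x1 \<in> B t"
      then show "?R\<^sup>*\<^sup>* t1 t" using bag_walk[OF x1(2) _ x1(1)] t1 by simp
    qed
  next
    case (step y y')
    then have y: "y \<in> X" "y' \<in> X" "{y, y'} \<in> edges G" by (auto simp: adj_in_def)
    then obtain t' where t': "t' \<in> verts T" "{y, y'} \<subseteq> B t'"
      using td by (auto simp: tree_decomposition_def)
    then have walk: "?R\<^sup>*\<^sup>* t1 t'" using step.IH by simp
    show ?case
    proof (intro ballI impI)
      fix t assume "t \<in> verts T" "y' \<in> B t"
      then have "?R\<^sup>*\<^sup>* t' t" using bag_walk[OF y(2) t'(1)] t'(2) by simp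
      with walk show "?R\<^sup>*\<^sup>* t1 t" by (rule rtranclp_trans)
    qed
  qed
  then show "?R\<^sup>*\<^sup>* t1 t2" using t2 x2(1) by simp
qed auto

definition clique_minor_model :: "'a graph \<Rightarrow> (nat \<Rightarrow> 'a set) \<Rightarrow> nat \<Rightarrow> bool" where
  "clique_minor_model G X n \<longleftrightarrow>
     (\<forall>i<n. X i \<noteq> {} \<and> connected_in G (X i)) \<and>
     (\<forall>i<n. \<forall>j<n. i \<noteq> j \<longrightarrow> X i \<inter> X j = {} \<and> (\<exists>x\<in>X i. \<exists>y\<in>X j. {x, y} \<in> edges G))"

lemma clique_minor_modelI:
  assumes "\<And>i. i < n \<Longrightarrow> X i \<noteq> {}" "\<And>i. i < n \<Longrightarrow> connected_in G (X i)"
    and "\<And>i j. i < j \<Longrightarrow> j < n \<Longrightarrow> X i \<inter> X j = {}"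
    and "\<And>i j. i < j \<Longrightarrow> j < n \<Longrightarrow> \<exists>x\<in>X i. \<exists>y\<in>X j. {x, y} \<in> edges G"
  shows "clique_minor_model G X n"
  unfolding clique_minor_model_def
proof (intro conjI allI impI)
  fix i j assume ij: "i < n" "j < n" "i \<noteq> j"
  show "X i \<inter> X j = {}"
  proof (cases "i < j")
    case False
    then have "j < i" using ij by simp
    then show ?thesis using assms(3)[of j i] ij by (simp add: Int_commute)
  qed (use assms(3) ij in simp)
  show "\<exists>x\<in>X i. \<exists>y\<in>X j. {x, y} \<in> edges G"
  proof (cases "i < j")
    case False
    then have "j < i" using ij by simp
    then obtain y x where "y \<in> X j" "x \<in> X i" "{y, x} \<in> edges G" using assms(4)[of j i] ij by blast
    then show ?thesis by (metis insert_commute)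
  qed (use assms(4) ij in simp)
qed (use assms(1,2) in auto)

lemma tree_decomposition_bag_meets:
  assumes "tree_decomposition G T B" "x \<in> verts G"
  shows "\<exists>t\<in>verts T. x \<in> B t"
  using assms by (simp add: tree_decomposition_def)

lemma tree_decomposition_clique_minor_bag:
  assumes td: "tree_decomposition G T B" and fin: "finite (verts G)" and X: "clique_minor_model G X n"
  shows "\<exists>t\<in>verts T. n \<le> card (B t)"
proof -
  define S where "S i = {t \<in> verts T. B t \<inter> X i \<noteq> {}}" for i
  have "\<exists>t\<in>verts T. \<forall>i\<in>{..<n}. t \<in> S i"
  proof (rule subtrees_Helly)
    show "is_tree T" using td by (simp add: tree_decomposition_def)
    show "connected_in T (S i)" if "i \<in> {..<n}" for i
      unfolding S_def using connected_in_bags_meeting[OF td] X that by (simp add: clique_minor_model_def)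
    show "S i \<inter> S j \<noteq> {}" if i: "i \<in> {..<n}" and j: "j \<in> {..<n}" for i j
    proof (cases "i = j")
      case True
      have "X i \<noteq> {}" using X i by (simp add: clique_minor_model_def)
      then obtain x where "x \<in> X i" by blast
      moreover from this have "x \<in> verts G" using X i by (auto simp: clique_minor_model_def connected_in_def)
      ultimately show ?thesis using tree_decomposition_bag_meets[OF td] True by (fastforce simp: S_def)
    next
      case False
      then have "\<exists>x\<in>X i. \<exists>y\<in>X j. {x, y} \<in> edges G"
        using X i j by (simp add: clique_minor_model_def)
      then obtain x y where "x \<in> X i" "y \<in> X j" "{x, y} \<in> edges G" by blast
      moreover have "\<exists>t\<in>verts T. {x, y} \<subseteq> B t" using td calculation(3) unfolding tree_decomposition_def by blast
      ultimately show ?thesis by (fastforce simp: S_def)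
    qed
    then show "S i \<noteq> {}" if "i \<in> {..<n}" for i using that by blast
  qed
  then obtain t where t: "t \<in> verts T" and tS: "\<forall>i\<in>{..<n}. t \<in> S i" by blast
  then have "\<forall>i\<in>{..<n}. \<exists>x. x \<in> B t \<inter> X i" by (auto simp: S_def)
  then obtain f where f: "\<And>i. i < n \<Longrightarrow> f i \<in> B t \<inter> X i" by (metis lessThan_iff)
  have "inj_on f {..<n}"
  proof (rule inj_onI, rule ccontr)
    fix i j assume "i \<in> {..<n}" "j \<in> {..<n}" "f i = f j" "i \<noteq> j"
    moreover from this have "X i \<inter> X j = {}" using X by (simp add: clique_minor_model_def)
    ultimately show False using f[of i] f[of j] by auto
  qed
  moreover have "f ` {..<n} \<subseteq> B t" using f by blast
  moreover have "finite (B t)" using td t fin by (auto simp: tree_decomposition_def intro: finite_subset)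
  ultimately have "card {..<n} \<le> card (B t)" by (metis card_image card_mono)
  then show ?thesis using t by auto
qed

lemma treewidth_eqI:
  assumes "tree_decomposition G T B" "\<forall>t\<in>verts T. card (B t) \<le> w + 1"
    and "finite (verts G)" "clique_minor_model G X (w + 1)"
  shows "treewidth G = w"
  unfolding treewidth_def
proof (rule Least_equality)
  show "\<exists>T B. tree_decomposition G T B \<and> (\<forall>t\<in>verts T. card (B t) \<le> w + 1)" using assms(1,2) by blast
  fix w' assume "\<exists>T B. tree_decomposition G T B \<and> (\<forall>t\<in>verts T. card (B t) \<le> w' + 1)"
  then obtain T' B' where "tree_decomposition G T' B'" "\<forall>t\<in>verts T'. card (B' t) \<le> w' + 1" by blast
  then show "w \<le> w'" using tree_decomposition_clique_minor_bag[OF _ assms(3,4)] by fastforce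
qed

definition path_graph :: "nat \<Rightarrow> nat graph" where
  "path_graph N = ({1..N}, {{t, t + 1} | t. 1 \<le> t \<and> t + 1 \<le> N})"

lemma verts_path_graph [simp]: "verts (path_graph N) = {1..N}"
  by (simp add: path_graph_def verts_def)

lemma path_graph_edge_iff:
  "{a, b} \<in> edges (path_graph N) \<longleftrightarrow> (1 \<le> a \<and> b = a + 1 \<and> b \<le> N) \<or> (1 \<le> b \<and> a = b + 1 \<and> a \<le> N)"
  by (auto simp: path_graph_def edges_def doubleton_eq_iff)

lemma connected_in_path_graph:
  assumes S: "S \<subseteq> {1..N}" and convex: "\<And>a b c. a \<in> S \<Longrightarrow> b \<in> S \<Longrightarrow> a \<le> c \<Longrightarrow> c \<le> b \<Longrightarrow> c \<in> S"
  shows "connected_in (path_graph N) S"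
proof -
  have walk: "(adj_in (path_graph N) S)\<^sup>*\<^sup>* a c" if "a \<in> S" "b \<in> S" "a \<le> c" "c \<le> b" for a b c
    using that(3,4)
  proof (induction c rule: dec_induct)
    case (step c)
    then have "c \<in> S" "Suc c \<in> S" using convex[OF that(1,2)] by simp_all
    then have "adj_in (path_graph N) S c (Suc c)" using S by (auto simp: adj_in_def path_graph_edge_iff)
    then show ?case using step by (simp add: rtranclp.rtrancl_into_rtrancl)
  qed simp
  show ?thesis unfolding connected_in_iff
  proof (intro conjI ballI)
    fix x y assume x: "x \<in> S" and y: "y \<in> S"
    show "(adj_in (path_graph N) S)\<^sup>*\<^sup>* x y"
    proof (cases "x \<le> y")
      case True
      then show ?thesis using walk[OF x y] by simp
    next
      case False
      then show ?thesis using walk[OF y x, of x] adj_in_rtranclp_sym by simp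
    qed
  qed (use S in simp)
qed

lemma is_tree_path_graph:
  assumes "N \<ge> 1"
  shows "is_tree (path_graph N)"
proof -
  have "simple_graph (path_graph N)"
    unfolding simple_graph_def
  proof (intro conjI ballI)
    fix e assume "e \<in> edges (path_graph N)"
    then obtain t where "e = {t, t + 1}" "1 \<le> t" "t + 1 \<le> N" by (auto simp: path_graph_def edges_def)
    then show "\<exists>x y. x \<noteq> y \<and> x \<in> verts (path_graph N) \<and> y \<in> verts (path_graph N) \<and> e = {x, y}"
      by (intro exI[of _ t] exI[of _ "t + 1"]) auto
  qed simp
  moreover have "\<nexists>xs. is_cycle (path_graph N) xs"
  proof
    assume "\<exists>xs. is_cycle (path_graph N) xs"
    then obtain xs where C: "is_cycle (path_graph N) xs" by blast
    then have "set xs \<noteq> {}" by (auto simp: is_cycle_def)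
    define M where "M = Max (set xs)"
    have M: "M \<in> set xs" "\<And>x. x \<in> set xs \<Longrightarrow> x \<le> M"
      using \<open>set xs \<noteq> {}\<close> by (simp_all add: M_def)
    then obtain y z where "y \<in> set xs" "z \<in> set xs" "y \<noteq> z"
      "{M, y} \<in> edges (path_graph N)" "{M, z} \<in> edges (path_graph N)"
      using is_cycle_two_nbrs[OF C] by blast
    then show False using M(2)[of y] M(2)[of z] by (auto simp: path_graph_edge_iff)
  qed
  moreover have "connected_in (path_graph N) (verts (path_graph N))"
    by (rule connected_in_path_graph) auto
  ultimately show ?thesis using assms by (simp add: is_tree_def)
qed

section \<open>The 2-adic valuation\<close>

lemma Greatest_power_dvd_eq_multiplicity:
  assumes "(j::nat) > 0"
  shows "(GREATEST i. 2 ^ i dvd j) = multiplicity 2 j"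
  using assms by (intro Greatest_equality) (auto simp: power_dvd_iff_le_multiplicity)

lemma two_pow_pred: "k \<ge> 1 \<Longrightarrow> (2::nat) ^ k = 2 * 2 ^ (k - 1)"
  by (metis Suc_diff_1 less_le_trans power_Suc zero_less_one)

lemma multiplicity_two_less:
  assumes "0 < (j::nat)" "j < 2 ^ k"
  shows "multiplicity 2 j < k"
proof (rule ccontr)
  assume "\<not> multiplicity 2 j < k"
  then have "2 ^ k dvd j" by (simp add: multiplicity_dvd')
  with assms show False by (simp add: nat_dvd_not_less)
qed

lemma multiplicity_two_pow_times_odd:
  assumes "odd (a::nat)"
  shows "multiplicity 2 (2 ^ i * a) = i"
  using assms by (intro multiplicity_decomposeI) auto

lemma multiplicity_two_pow_sum:
  assumes "i < j"
  shows "multiplicity 2 ((2::nat) ^ i + 2 ^ j) = i"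
  using multiplicity_sum_lt[of "2::nat" "2 ^ i" "2 ^ j"] assms by (simp add: multiplicity_prime_power)

lemma multiplicity_two_eq_top:
  assumes "multiplicity 2 j = k - 1" "1 \<le> j" "j < (2::nat) ^ k" "k \<ge> 1"
  shows "j = 2^(k - 1)"
proof -
  obtain c where c: "j = 2^(k - 1) * c" using assms(1) multiplicity_dvd[of 2 j] by auto
  have "c < 2" using assms(3,4) two_pow_pred[of k] c by (metis mult.commute mult_less_cancel2)
  moreover have "c \<noteq> 0" using c assms(2) by auto
  ultimately show ?thesis using c by (metis One_nat_def less_2_cases mult.right_neutral)
qed

lemma exists_multiplicity_two_between:
  assumes "(s::nat) < e" "2 ^ i dvd s" "2 ^ i dvd e"
  shows "\<exists>j. s \<le> j \<and> j \<le> e \<and> multiplicity 2 j = i"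
proof -
  obtain a b where s: "s = 2 ^ i * a" and e: "e = 2 ^ i * b" using assms(2,3) by blast
  have "a < b" using assms(1) s e by simp
  then have next_le: "2 ^ i * (a + 1) \<le> e" unfolding e by (intro mult_le_mono2) simp
  show ?thesis
  proof (cases "odd a")
    case True
    then show ?thesis using multiplicity_two_pow_times_odd assms(1) s by auto
  next
    case False
    then have "odd (a + 1)" by simp
    then have "multiplicity 2 (2 ^ i * (a + 1)) = i" by (rule multiplicity_two_pow_times_odd)
    then show ?thesis using next_le s by (intro exI[of _ "2 ^ i * (a + 1)"]) simp
  qed
qed

lemma nat_run_start:
  assumes "(e::nat) \<in> U" "0 \<notin> U"
  shows "\<exists>s. s \<le> e \<and> {s..e} \<subseteq> U \<and> s - 1 \<notin> U"
  using assms
proof (induction e)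
  case (Suc e)
  show ?case
  proof (cases "e \<in> U")
    case True
    then obtain s where "s \<le> e" "{s..e} \<subseteq> U" "s - 1 \<notin> U" using Suc by blast
    with Suc.prems show ?thesis by (intro exI[of _ s]) (auto simp: le_Suc_eq)
  qed (use Suc.prems in auto)
qed simp

section \<open>The graph $G_k$: order, cycles and $K_{3,3}$\<close>

lemma Gk_verts: "verts (Gk k) = Inl ` {1 .. 2^k - 1} \<union> Inr ` {..<k}"
  by (simp add: Gk_def verts_def)

lemma Gk_edges:
  "edges (Gk k) = {{Inl j, Inl (j + 1)} | j. 1 \<le> j \<and> j + 1 \<le> 2^k - 1} \<union>
                  {{Inr (multiplicity 2 j), Inl j} | j. 1 \<le> j \<and> j \<le> 2^k - 1}"
proof -
  have "i < k \<and> 1 \<le> j \<and> j \<le> 2^k - 1 \<and> i = (GREATEST i. 2^i dvd j) \<longleftrightarrow>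
        1 \<le> j \<and> j \<le> 2^k - 1 \<and> i = multiplicity 2 j" for i j :: nat
    using multiplicity_two_less[of j k] Greatest_power_dvd_eq_multiplicity[of j] by auto
  then show ?thesis by (simp add: Gk_def edges_def)
qed

lemma Inl_in_Gk_verts [simp]: "Inl j \<in> verts (Gk k) \<longleftrightarrow> 1 \<le> j \<and> j \<le> 2^k - 1"
  by (auto simp: Gk_verts)

lemma Inr_in_Gk_verts [simp]: "Inr i \<in> verts (Gk k) \<longleftrightarrow> i < k"
  by (auto simp: Gk_verts)

lemma Gk_edge_Inl_Inl:
  "{Inl a, Inl b} \<in> edges (Gk k) \<longleftrightarrow>
     (1 \<le> a \<and> b = a + 1 \<and> b \<le> 2^k - 1) \<or> (1 \<le> b \<and> a = b + 1 \<and> a \<le> 2^k - 1)"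
  by (auto simp: Gk_edges doubleton_eq_iff)

lemma Gk_edge_Inr_Inr: "{Inr a, Inr b} \<notin> edges (Gk k)"
  by (auto simp: Gk_edges doubleton_eq_iff)

lemma Gk_edge_Inr_Inl:
  "{Inr i, Inl j} \<in> edges (Gk k) \<longleftrightarrow> 1 \<le> j \<and> j \<le> 2^k - 1 \<and> i = multiplicity 2 j"
  by (auto simp: Gk_edges doubleton_eq_iff)

lemma Gk_nbrs_Inl:
  assumes "{Inl j, y} \<in> edges (Gk k)"
  shows "y \<in> {Inl (j - 1), Inl (j + 1), Inr (multiplicity 2 j)}"
proof (cases y)
  case Inl
  then show ?thesis using assms by (auto simp: Gk_edge_Inl_Inl)
next
  case (Inr i)
  then show ?thesis using assms insert_commute[of "Inl j" y "{}"] by (simp add: Gk_edge_Inr_Inl)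
qed

lemma simple_graph_Gk: "simple_graph (Gk k)"
  unfolding simple_graph_def
proof (intro conjI ballI)
  show "finite (verts (Gk k))" by (simp add: Gk_verts)
  fix e assume "e \<in> edges (Gk k)"
  then consider j where "e = {Inl j, Inl (j + 1)}" "1 \<le> j" "j + 1 \<le> 2^k - 1"
    | j where "e = {Inr (multiplicity 2 j), Inl j}" "1 \<le> j" "j \<le> 2^k - 1"
    unfolding Gk_edges by blast
  then show "\<exists>x y. x \<noteq> y \<and> x \<in> verts (Gk k) \<and> y \<in> verts (Gk k) \<and> e = {x, y}"
  proof cases
    case 1
    then show ?thesis by (intro exI[of _ "Inl j"] exI[of _ "Inl (j + 1)"]) auto
  next
    case 2
    then show ?thesis
      using multiplicity_two_less[of j k] by (intro exI[of _ "Inr (multiplicity 2 j)"] exI[of _ "Inl j"]) auto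
  qed
qed

lemma card_verts_Gk: "card (verts (Gk k)) = 2^k + k - 1"
proof -
  have "card (verts (Gk k)) = card (Inl ` {1 .. 2^k - 1} :: (nat + nat) set) + card (Inr ` {..<k} :: (nat + nat) set)"
    unfolding Gk_verts by (rule card_Un_disjoint) auto
  also have "\<dots> = (2^k - 1) + k" by (simp add: card_image)
  finally show ?thesis by simp
qed

lemma Gk_walk_along_path:
  assumes "\<And>x. a \<le> x \<Longrightarrow> x \<le> b \<Longrightarrow> Inl x \<in> S" "1 \<le> a" "b \<le> 2^k - 1" "a \<le> x" "x \<le> b"
  shows "(adj_in (Gk k) S)\<^sup>*\<^sup>* (Inl a) (Inl x)"
  using assms(4,5)
proof (induction x rule: dec_induct)
  case (step x)
  then have "adj_in (Gk k) S (Inl x) (Inl (Suc x))"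
    using assms(1-3) by (simp add: adj_in_def Gk_edge_Inl_Inl)
  then show ?case using step by (simp add: rtranclp.rtrancl_into_rtrancl)
qed simp

lemma Gk_cycle_has_Inl:
  assumes C: "is_cycle (Gk k) C"
  shows "\<exists>j. Inl j \<in> set C"
proof -
  have "C \<noteq> []" using C by (auto simp: is_cycle_def)
  then obtain x where x: "x \<in> set C" by (meson ex_in_conv set_empty)
  then obtain y where y: "y \<in> set C" "{x, y} \<in> edges (Gk k)" using is_cycle_two_nbrs[OF C] by blast
  show ?thesis
  proof (cases x)
    case Inl
    then show ?thesis using x by blast
  next
    case Inr
    then obtain j where "y = Inl j" using y(2) Gk_edge_Inr_Inr by (cases y) auto
    then show ?thesis using y(1) by blast
  qed
qed

lemma Gk_cycle_meets_multiplicity: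
  assumes C: "is_cycle (Gk k) C" and min: "\<And>i'. Inr i' \<in> set C \<Longrightarrow> i \<le> i'"
  shows "\<exists>j. Inl j \<in> set C \<and> multiplicity 2 j = i"
proof -
  define U where "U = {j. Inl j \<in> set C}"
  have U_range: "U \<subseteq> {1 .. 2^k - 1}" using is_cycle_verts[OF C] by (auto simp: U_def)
  have "U \<noteq> {}" using Gk_cycle_has_Inl[OF C] by (auto simp: U_def)
  define e where "e = Max U"
  have "finite U" using U_range finite_subset by blast
  then have e: "e \<in> U" "e + 1 \<notin> U" using \<open>U \<noteq> {}\<close> by (auto simp: e_def dest: Max_ge)
  have "Inl (e - 1) \<in> set C \<and> Inr (multiplicity 2 e) \<in> set C"
  proof (rule is_cycle_nbrs_cover[OF C])
    show "Inl e \<in> set C" "Inl (e + 1) \<notin> set C" using e by (simp_all add: U_def)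
    show "\<And>y. {Inl e, y} \<in> edges (Gk k) \<Longrightarrow> y \<in> {Inl (e + 1), Inl (e - 1), Inr (multiplicity 2 e)}"
      using Gk_nbrs_Inl by blast
  qed
  then have e1: "e - 1 \<in> U" and ie: "i \<le> multiplicity 2 e" using min by (auto simp: U_def)
  obtain s where s: "s \<le> e" "{s..e} \<subseteq> U" "s - 1 \<notin> U"
    using nat_run_start[OF e(1)] U_range by force
  have "s < e" using s e1 by (metis le_neq_implies_less)
  have "Inl (s + 1) \<in> set C \<and> Inr (multiplicity 2 s) \<in> set C"
  proof (rule is_cycle_nbrs_cover[OF C])
    show "Inl s \<in> set C" "Inl (s - 1) \<notin> set C" using s by (auto simp: U_def)
    show "\<And>y. {Inl s, y} \<in> edges (Gk k) \<Longrightarrow> y \<in> {Inl (s - 1), Inl (s + 1), Inr (multiplicity 2 s)}"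
      by (rule Gk_nbrs_Inl)
  qed
  then have "i \<le> multiplicity 2 s" using min by blast
  then obtain j where "s \<le> j" "j \<le> e" "multiplicity 2 j = i"
    using exists_multiplicity_two_between[OF \<open>s < e\<close>] ie by (meson multiplicity_dvd')
  then show ?thesis using s(2) by (auto simp: U_def)
qed

lemma O2_free_Gk: "O2_free (Gk k)"
proof -
  have has_Inr: "\<exists>i. Inr i \<in> set C" if C: "is_cycle (Gk k) C" for C
  proof (rule ccontr)
    assume "\<nexists>i. Inr i \<in> set C"
    then obtain j where "Inl j \<in> set C" "multiplicity 2 j = k"
      using Gk_cycle_meets_multiplicity[OF C, of k] by blast
    moreover from this have "0 < j" "j < 2^k" using is_cycle_verts[OF C] by force+
    ultimately show False using multiplicity_two_less[of j k] by simp
  qed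
  have not_indep: "\<not> independent_sets (Gk k) (set C1) (set C2)"
    if C2: "is_cycle (Gk k) C2" and i: "Inr i \<in> set C1" and min: "\<And>i'. Inr i' \<in> set C2 \<Longrightarrow> i \<le> i'"
    for C1 C2 i
  proof -
    obtain j where j: "Inl j \<in> set C2" "multiplicity 2 j = i"
      using Gk_cycle_meets_multiplicity[OF C2 min] by blast
    then have "{Inr i, Inl j} \<in> edges (Gk k)"
      using is_cycle_verts[OF C2] by (auto simp: Gk_edge_Inr_Inl)
    then show ?thesis using i j(1) by (auto simp: independent_sets_def)
  qed
  show ?thesis unfolding O2_free_def
  proof clarify
    fix C1 C2 assume C: "is_cycle (Gk k) C1" "is_cycle (Gk k) C2"
      and ind: "independent_sets (Gk k) (set C1) (set C2)"
    obtain i where i: "Inr i \<in> set C1 \<union> set C2" and min: "\<And>i'. Inr i' \<in> set C1 \<union> set C2 \<Longrightarrow> i \<le> i'"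
      using has_Inr[OF C(1)] exists_least_iff[of "\<lambda>i. Inr i \<in> set C1 \<union> set C2"] by (metis Un_iff not_le)
    show False
    proof (cases "Inr i \<in> set C1")
      case True
      then show False using not_indep[OF C(2) True] min ind by blast
    next
      case False
      then have "Inr i \<in> set C2" using i by simp
      then have "\<not> independent_sets (Gk k) (set C2) (set C1)" using not_indep[OF C(1)] min by blast
      then show False using ind independent_sets_commute by blast
    qed
  qed
qed

lemma Gk_K33_side_not_Inl:
  assumes d: "distinct [a1, a2, a3, b1, b2, b3]"
    and E: "\<forall>a\<in>{a1, a2, a3}. \<forall>b\<in>{b1, b2, b3}. {a, b} \<in> edges (Gk k)"
  shows "a1 \<noteq> Inl j"
proof
  assume a1: "a1 = Inl j"
  \<comment> \<open>The three neighbours of u_j form the b-side, so the a-side lies in the common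
    neighbourhood of u_(j-1) and u_(j+1), which has only two vertices.\<close>
  let ?N = "\<lambda>j. {Inl (j - 1), Inl (j + 1), Inr (multiplicity 2 j)}"
  have "{b1, b2, b3} \<subseteq> ?N j"
  proof
    fix b assume "b \<in> {b1, b2, b3}"
    then have "{Inl j, b} \<in> edges (Gk k)" using E a1 by blast
    then show "b \<in> ?N j" by (rule Gk_nbrs_Inl)
  qed
  moreover have "distinct [b1, b2, b3]" using d by simp
  ultimately have B: "{b1, b2, b3} = ?N j" by (intro distinct3_subset_eq)
  have "{a1, a2, a3} \<subseteq> ?N (j - 1) \<inter> ?N (j + 1)"
  proof
    fix a assume "a \<in> {a1, a2, a3}"
    then have "{a, Inl (j - 1)} \<in> edges (Gk k)" "{a, Inl (j + 1)} \<in> edges (Gk k)"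
      using E unfolding B by blast+
    then have "{Inl (j - 1), a} \<in> edges (Gk k)" "{Inl (j + 1), a} \<in> edges (Gk k)"
      by (simp_all only: insert_commute[of a])
    then show "a \<in> ?N (j - 1) \<inter> ?N (j + 1)" by (intro IntI Gk_nbrs_Inl)
  qed
  also have "\<dots> \<subseteq> {Inl j, Inr (multiplicity 2 (j + 1))}" by auto
  finally have "{a1, a2, a3} \<subseteq> {Inl j, Inr (multiplicity 2 (j + 1))}" .
  moreover have "distinct [a1, a2, a3]" using d by simp
  ultimately show False using distinct3_not_subset_pair by metis
qed

lemma not_has_K33_subgraph_Gk: "\<not> has_K33_subgraph (Gk k)"
  unfolding has_K33_subgraph_def
proof clarify
  fix a1 a2 a3 b1 b2 b3 :: "nat + nat"
  assume d: "distinct [a1, a2, a3, b1, b2, b3]"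
    and E: "\<forall>a\<in>{a1, a2, a3}. \<forall>b\<in>{b1, b2, b3}. {a, b} \<in> edges (Gk k)"
  show False
  proof (cases a1)
    case (Inl j)
    then show False using Gk_K33_side_not_Inl[OF d E] by blast
  next
    case Inr
    moreover have "{a1, b1} \<in> edges (Gk k)" using E by blast
    ultimately obtain j where "b1 = Inl j" using Gk_edge_Inr_Inr by (cases b1) auto
    moreover have "distinct [b1, b2, b3, a1, a2, a3]" using d by auto
    moreover have "\<forall>b\<in>{b1, b2, b3}. \<forall>a\<in>{a1, a2, a3}. {b, a} \<in> edges (Gk k)"
    proof (intro ballI)
      fix a b assume "a \<in> {a1, a2, a3}" "b \<in> {b1, b2, b3}"
      then have "{a, b} \<in> edges (Gk k)" using E by blast
      then show "{b, a} \<in> edges (Gk k)" by (simp only: insert_commute[of a])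
    qed
    ultimately show False using Gk_K33_side_not_Inl[of b1 b2 b3 a1 a2 a3] by blast
  qed
qed

section \<open>The treewidth of $G_k$\<close>

(* Bag t of a path decomposition along u_1 ... u_(2^k-1): all of v_0 ... v_(k-2), plus the path
   edge u_t u_(t+1) left of the middle m = 2^(k-1), the edge u_m v_(k-1) at the middle, and the path
   edge u_(t-1) u_t right of it. *)
definition Gk_bag :: "nat \<Rightarrow> nat \<Rightarrow> (nat + nat) set" where
  "Gk_bag k t = Inr ` {..<k - 1} \<union>
     (if t < 2^(k - 1) then {Inl t, Inl (t + 1)}
      else if t = 2^(k - 1) then {Inl t, Inr (k - 1)}
      else {Inl (t - 1), Inl t})"

lemma Inr_in_Gk_bag: "Inr i \<in> Gk_bag k t \<longleftrightarrow> i < k - 1 \<or> (t = 2^(k - 1) \<and> i = k - 1)"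
  by (auto simp: Gk_bag_def)

lemma Inl_in_Gk_bag:
  "Inl j \<in> Gk_bag k t \<longleftrightarrow>
     (if j \<le> 2^(k - 1) then j - 1 else j) \<le> t \<and> t \<le> (if j < 2^(k - 1) then j else j + 1)"
  by (auto simp: Gk_bag_def)

lemma card_Gk_bag_le:
  assumes "k \<ge> 1"
  shows "card (Gk_bag k t) \<le> k + 1"
proof -
  let ?P = "if t < 2^(k - 1) then {Inl t, Inl (t + 1)}
            else if t = 2^(k - 1) then {Inl t, Inr (k - 1)} else {Inl (t - 1), Inl t} :: (nat + nat) set"
  have "card (Gk_bag k t) \<le> card (Inr ` {..<k - 1} :: (nat + nat) set) + card ?P"
    unfolding Gk_bag_def by (rule card_Un_le)
  also have "\<dots> \<le> (k - 1) + 2"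
    using card_image_le[of "{..<k - 1}" "Inr :: nat \<Rightarrow> nat + nat"] by (intro add_mono) (auto simp: card_insert_if)
  finally show ?thesis using assms by simp
qed

lemma Gk_bag_convex:
  assumes "v \<in> Gk_bag k a" "v \<in> Gk_bag k b" "a \<le> c" "c \<le> b"
  shows "v \<in> Gk_bag k c"
  using assms by (cases v) (auto simp: Inl_in_Gk_bag Inr_in_Gk_bag)

lemma Gk_bag_subset_verts:
  assumes "k \<ge> 1" "t \<in> {1 .. 2^k - 1}"
  shows "Gk_bag k t \<subseteq> verts (Gk k)"
proof
  fix v assume "v \<in> Gk_bag k t"
  then show "v \<in> verts (Gk k)"
    using assms two_pow_pred[of k] by (cases v) (auto simp: Inl_in_Gk_bag Inr_in_Gk_bag split: if_splits)
qed

lemma Gk_vertex_in_bag: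
  assumes "k \<ge> 1" "v \<in> verts (Gk k)"
  shows "\<exists>t\<in>{1 .. 2^k - 1}. v \<in> Gk_bag k t"
proof (cases v)
  case (Inl j)
  then show ?thesis using assms by (intro bexI[of _ j]) (auto simp: Inl_in_Gk_bag)
next
  case (Inr i)
  have "(1::nat) \<le> 2 ^ (k - 1)" by simp
  then show ?thesis
    using Inr assms two_pow_pred[of k] by (intro bexI[of _ "2^(k - 1)"]) (auto simp: Inr_in_Gk_bag)
qed

lemma Gk_edge_in_bag:
  assumes k: "k \<ge> 1" and e: "e \<in> edges (Gk k)"
  shows "\<exists>t\<in>{1 .. 2^k - 1}. e \<subseteq> Gk_bag k t"
proof -
  define m where "m = (2::nat) ^ (k - 1)"
  have m: "m \<ge> 1" "2^k - 1 = 2 * m - 1" using two_pow_pred[OF k] by (simp_all add: m_def)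
  note IL = Inl_in_Gk_bag[of _ k, folded m_def] and IR = Inr_in_Gk_bag[of _ k, folded m_def]
  from e consider j where "e = {Inl j, Inl (j + 1)}" "1 \<le> j" "j + 1 \<le> 2^k - 1"
    | j where "e = {Inr (multiplicity 2 j), Inl j}" "1 \<le> j" "j \<le> 2^k - 1"
    unfolding Gk_edges by blast
  then show ?thesis
  proof cases
    case 1
    show ?thesis
    proof (cases "j < m")
      case True
      then show ?thesis using 1 m by (intro bexI[of _ j]) (auto simp: IL)
    next
      case False
      then show ?thesis using 1 m by (intro bexI[of _ "j + 1"]) (auto simp: IL)
    qed
  next
    case 2
    show ?thesis
    proof (cases "multiplicity 2 j < k - 1")
      case True
      then show ?thesis using 2 by (intro bexI[of _ j]) (auto simp: IL IR)
    next
      case False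
      moreover have jk: "j < 2 ^ k" using 2(3) by (simp add: le_diff_conv2)
      ultimately have "multiplicity 2 j = k - 1" using 2 multiplicity_two_less[of j k] by simp
      moreover from this have "j = m" using multiplicity_two_eq_top 2 jk k unfolding m_def by simp
      ultimately show ?thesis using 2 m by (intro bexI[of _ m]) (auto simp: IL IR)
    qed
  qed
qed

lemma tree_decomposition_Gk:
  assumes k: "k \<ge> 1"
  shows "tree_decomposition (Gk k) (path_graph (2^k - 1)) (Gk_bag k)"
  unfolding tree_decomposition_def verts_path_graph
proof (intro conjI ballI)
  have "(2::nat) \<le> 2 ^ k" using k by (simp add: self_le_power)
  then show "is_tree (path_graph (2^k - 1))" by (intro is_tree_path_graph) linarith
  show "connected_in (path_graph (2^k - 1)) {t \<in> {1 .. 2^k - 1}. v \<in> Gk_bag k t}" for v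
  proof (rule connected_in_path_graph)
    fix a b c assume "a \<in> {t \<in> {1 .. 2^k - 1}. v \<in> Gk_bag k t}"
      "b \<in> {t \<in> {1 .. 2^k - 1}. v \<in> Gk_bag k t}" "a \<le> c" "c \<le> b"
    then show "c \<in> {t \<in> {1 .. 2^k - 1}. v \<in> Gk_bag k t}"
      using Gk_bag_convex[of v k a b c] by auto
  qed auto
  show "Gk_bag k t \<subseteq> verts (Gk k)" if "t \<in> {1 .. 2^k - 1}" for t
    using Gk_bag_subset_verts[OF k that] .
  show "\<exists>t\<in>{1 .. 2^k - 1}. v \<in> Gk_bag k t" if "v \<in> verts (Gk k)" for v
    using Gk_vertex_in_bag[OF k that] .
  show "\<exists>t\<in>{1 .. 2^k - 1}. e \<subseteq> Gk_bag k t" if "e \<in> edges (Gk k)" for e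
    using Gk_edge_in_bag[OF k that] .
qed

definition Gk_branch_lo :: "nat \<Rightarrow> nat" where
  "Gk_branch_lo i = (if i = 0 then 0 else 2 ^ (i - 1))"

definition Gk_branch_hi :: "nat \<Rightarrow> nat \<Rightarrow> nat" where
  "Gk_branch_hi k i = (if i < k then 2 ^ i else 2 ^ k - 1)"

definition Gk_branch :: "nat \<Rightarrow> nat \<Rightarrow> (nat + nat) set" where
  "Gk_branch k i = (if i < k then {Inr i} else {}) \<union> Inl ` {Gk_branch_lo i<..Gk_branch_hi k i}"

lemma Inl_in_Gk_branch: "Inl j \<in> Gk_branch k i \<longleftrightarrow> Gk_branch_lo i < j \<and> j \<le> Gk_branch_hi k i"
  by (auto simp: Gk_branch_def)

lemma Inr_in_Gk_branch: "Inr i' \<in> Gk_branch k i \<longleftrightarrow> i' = i \<and> i < k"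
  by (auto simp: Gk_branch_def)

lemma Gk_branch_lo_less_hi:
  assumes "k \<ge> 2" "i \<le> k"
  shows "Gk_branch_lo i < Gk_branch_hi k i"
proof -
  have "(2::nat) \<le> 2 ^ (k - 1)" using assms(1) by (simp add: self_le_power)
  then show ?thesis
    using assms two_pow_pred[of i] two_pow_pred[of k] by (auto simp: Gk_branch_lo_def Gk_branch_hi_def)
qed

lemma Gk_branch_hi_le: "Gk_branch_hi k i \<le> 2 ^ k - 1"
proof (cases "i < k")
  case True
  then have "(2::nat) ^ i < 2 ^ k" by (rule power_strict_increasing) simp
  then have "(2::nat) ^ i \<le> 2 ^ k - 1" by linarith
  then show ?thesis using True by (simp add: Gk_branch_hi_def)
qed (simp add: Gk_branch_hi_def)

lemma Gk_branch_hi_le_lo: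
  assumes "i < j"
  shows "Gk_branch_hi k i \<le> Gk_branch_lo j"
proof -
  have "Gk_branch_hi k i \<le> 2 ^ i"
  proof (cases "i < k")
    case False
    then have "(2::nat) ^ k \<le> 2 ^ i" by (intro power_increasing) simp_all
    then have "(2::nat) ^ k - 1 \<le> 2 ^ i" by linarith
    then show ?thesis using False by (simp add: Gk_branch_hi_def)
  qed (simp add: Gk_branch_hi_def)
  also have "\<dots> \<le> 2 ^ (j - 1)" using assms by (simp add: power_increasing)
  finally show ?thesis using assms by (simp add: Gk_branch_lo_def)
qed

lemma connected_in_Gk_branch:
  assumes k: "k \<ge> 2" and i: "i \<le> k"
  shows "connected_in (Gk k) (Gk_branch k i)"
proof (rule connected_inI_center)
  let ?lo = "Gk_branch_lo i" and ?hi = "Gk_branch_hi k i"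
  have seg: "(adj_in (Gk k) (Gk_branch k i))\<^sup>*\<^sup>* (Inl (?lo + 1)) (Inl x)" if "?lo < x" "x \<le> ?hi" for x
    by (rule Gk_walk_along_path) (use that Gk_branch_hi_le[of k i] in \<open>auto simp: Inl_in_Gk_branch\<close>)
  show "Inl (?lo + 1) \<in> Gk_branch k i" using Gk_branch_lo_less_hi[OF k i] by (simp add: Inl_in_Gk_branch)
  show "Gk_branch k i \<subseteq> verts (Gk k)" using Gk_branch_hi_le[of k i] by (auto simp: Gk_branch_def)
  fix v assume "v \<in> Gk_branch k i"
  then consider j where "v = Inl j" "?lo < j" "j \<le> ?hi" | "v = Inr i" "i < k"
    by (auto simp: Gk_branch_def split: if_splits)
  then show "(adj_in (Gk k) (Gk_branch k i))\<^sup>*\<^sup>* (Inl (?lo + 1)) v"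
  proof cases
    case 1
    then show ?thesis using seg by simp
  next
    case 2
    then have "?hi = 2 ^ i" by (simp add: Gk_branch_hi_def)
    then have "adj_in (Gk k) (Gk_branch k i) (Inl (2 ^ i)) (Inr i)"
      using 2 Gk_branch_hi_le[of k i] Gk_branch_lo_less_hi[OF k i]
      by (auto simp: adj_in_def Inl_in_Gk_branch Inr_in_Gk_branch insert_commute[of "Inl _"]
          Gk_edge_Inr_Inl multiplicity_prime_power)
    moreover have "(adj_in (Gk k) (Gk_branch k i))\<^sup>*\<^sup>* (Inl (?lo + 1)) (Inl (2 ^ i))"
      using seg[of "2 ^ i"] Gk_branch_lo_less_hi[OF k i] \<open>?hi = 2 ^ i\<close> by simp
    ultimately show ?thesis using 2 by (simp add: rtranclp.rtrancl_into_rtrancl)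
  qed
qed

lemma Gk_branches_adjacent:
  assumes k: "k \<ge> 2" and ij: "i < j" and j: "j \<le> k"
  shows "\<exists>x\<in>Gk_branch k i. \<exists>y\<in>Gk_branch k j. {x, y} \<in> edges (Gk k)"
proof (cases "j = i + 1")
  case True
  have "Inl (2 ^ i) \<in> Gk_branch k i"
    using ij j Gk_branch_lo_less_hi[OF k, of i] by (simp add: Inl_in_Gk_branch Gk_branch_hi_def)
  moreover have "Inl (2 ^ i + 1) \<in> Gk_branch k j"
    using True j Gk_branch_lo_less_hi[OF k j] by (simp add: Inl_in_Gk_branch Gk_branch_lo_def)
  moreover have "{Inl (2 ^ i), Inl (2 ^ i + 1)} \<in> edges (Gk k)"
    using True Gk_branch_lo_less_hi[OF k j] Gk_branch_hi_le[of k j]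
    by (simp add: Gk_edge_Inl_Inl Gk_branch_lo_def)
  ultimately show ?thesis by blast
next
  case False
  then have "i < j - 1" using ij by simp
  have lt: "(2::nat) ^ i < 2 ^ (j - 1)" using \<open>i < j - 1\<close> by (simp add: power_strict_increasing)
  have "2 ^ i + 2 ^ (j - 1) \<le> Gk_branch_hi k j"
  proof (cases "j < k")
    case True
    then have "Gk_branch_hi k j = 2 * 2 ^ (j - 1)" using two_pow_pred[of j] ij by (simp add: Gk_branch_hi_def)
    then show ?thesis using lt by linarith
  next
    case False
    then have "Gk_branch_hi k j = 2 * 2 ^ (j - 1) - 1"
      using j k two_pow_pred[of k] by (simp add: Gk_branch_hi_def)
    then show ?thesis using lt by linarith
  qed
  then have "Inl (2 ^ i + 2 ^ (j - 1)) \<in> Gk_branch k j" using ij by (simp add: Inl_in_Gk_branch Gk_branch_lo_def)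
  moreover have "Inr i \<in> Gk_branch k i" using ij j by (simp add: Inr_in_Gk_branch)
  moreover have "{Inr i, Inl (2 ^ i + 2 ^ (j - 1))} \<in> edges (Gk k)"
    using \<open>2 ^ i + 2 ^ (j - 1) \<le> Gk_branch_hi k j\<close> Gk_branch_hi_le[of k j]
      multiplicity_two_pow_sum[OF \<open>i < j - 1\<close>]
    by (simp add: Gk_edge_Inr_Inl Suc_le_eq)
  ultimately show ?thesis by blast
qed

lemma clique_minor_model_Gk_branch:
  assumes k: "k \<ge> 2"
  shows "clique_minor_model (Gk k) (Gk_branch k) (k + 1)"
proof (rule clique_minor_modelI)
  show "Gk_branch k i \<noteq> {}" if "i < k + 1" for i
    using Gk_branch_lo_less_hi[OF k, of i] that Inl_in_Gk_branch[of "Gk_branch_hi k i" k i] by auto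
  show "connected_in (Gk k) (Gk_branch k i)" if "i < k + 1" for i
    using connected_in_Gk_branch[OF k] that by simp
  show "Gk_branch k i \<inter> Gk_branch k j = {}" if "i < j" for i j
    using Gk_branch_hi_le_lo[OF that, of k] that by (auto simp: Gk_branch_def)
  show "\<exists>x\<in>Gk_branch k i. \<exists>y\<in>Gk_branch k j. {x, y} \<in> edges (Gk k)" if "i < j" "j < k + 1" for i j
    using Gk_branches_adjacent[OF k] that by simp
qed

lemma clique_minor_model_Gk1: "clique_minor_model (Gk 1) (\<lambda>i. if i = 0 then {Inr 0} else {Inl 1}) 2"
proof (rule clique_minor_modelI)
  have "{Inr 0, Inl 1} \<in> edges (Gk 1)" by (simp add: Gk_edge_Inr_Inl)
  then show "\<exists>x\<in>(if i = 0 then {Inr 0} else {Inl 1}). \<exists>y\<in>(if j = 0 then {Inr 0} else {Inl 1}).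
      {x, y} \<in> edges (Gk 1)" if "i < j" "j < 2" for i j :: nat
    using that by auto
  show "connected_in (Gk 1) (if i = 0 then {Inr 0} else {Inl 1})" for i :: nat
    by (simp add: connected_in_singleton)
qed auto

lemma treewidth_Gk:
  assumes "k \<ge> 1"
  shows "treewidth (Gk k) = k"
proof -
  have "\<exists>X. clique_minor_model (Gk k) X (k + 1)"
  proof (cases "k = 1")
    case True
    then show ?thesis using clique_minor_model_Gk1 by (metis one_add_one)
  next
    case False
    then have "k \<ge> 2" using assms by simp
    then show ?thesis using clique_minor_model_Gk_branch by blast
  qed
  then obtain X where X: "clique_minor_model (Gk k) X (k + 1)" by blast
  have "finite (verts (Gk k))" by (simp add: Gk_verts)
  then show ?thesis
    using treewidth_eqI[OF tree_decomposition_Gk[OF assms] _ _ X] card_Gk_bag_le[OF assms] by blast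
qed

theorem mainTheorem3:
  fixes k :: nat
  assumes "k \<ge> 1"
  shows "simple_graph (Gk k) \<and> card (verts (Gk k)) = 2^k + k - 1 \<and> O2_free (Gk k) \<and>
         \<not> has_K33_subgraph (Gk k) \<and> treewidth (Gk k) = k"
  using simple_graph_Gk card_verts_Gk O2_free_Gk not_has_K33_subgraph_Gk treewidth_Gk[OF assms]
  by simp

end
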